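(* Let $\boldsymbol\mu\in\mathcal{P}(\Phi)$ and suppose $k=\|\boldsymbol\mu\|+\ell(\boldsymbol\mu^e)\le n$. Then the centralizer $\mathcal A_{\boldsymbol\mu^{\uparrow n}}$ of $J_{\boldsymbol\mu^{\uparrow n}}$ in $G_n$ has cardinality $$|\mathcal A_{\boldsymbol\mu^{\uparrow k}}|\cdot|G_{n-k}|\cdot\big|\{B\in M_{k\times(n-k)}(\mathbb F_q)\mid J_{\boldsymbol\mu^{\uparrow k}}B=B\}\big|\cdot\big|\{C\in M_{(n-k)\times k}(\mathbb F_q)\mid CJ_{\boldsymbol\mu^{\uparrow k}}=C\}\big|,$$ where $\mathcal A_{\boldsymbol\mu^{\uparrow k}}$ is the centralizer of $J_{\boldsymbol\mu^{\uparrow k}}$ in $G_k$.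
   Context: $q$ is a prime power, $G_n=GL_n(\mathbb F_q)$, $M_{a\times b}(\mathbb F_q)$ the $a\times b$ matrices. $\Phi$ is the set of monic irreducible polynomials in $\mathbb F_q[t]$ other than $t$, $d(f)$ the degree of $f$; $\mathcal{P}(\Phi)$ is the set of finitely supported maps $\boldsymbol\lambda$ from $\Phi$ to partitions, $\|\boldsymbol\lambda\|=\sum_f d(f)|\boldsymbol\lambda(f)|$, $\boldsymbol\lambda^e=\boldsymbol\lambda(t-1)$, $\ell$ = number of nonzero parts. For $f=t^d-\sum_{i=1}^d a_it^{i-1}\in\Phi$, $J(f)$ is the $d\times d$ companion matrix with $1$'s on the superdiagonal, last row $(a_1,\dots,a_d)$, zeros elsewhere; $J_m(f)$ is the $dm\times dm$ block upper triangular matrix with $m$ diagonal blocks $J(f)$ and blocks $I_d$ on the block superdiagonal. $J_{\boldsymbol\lambda}$ is the block diagonal matrix with blocks $J_{\boldsymbol\lambda_i(f)}(f)$ over all $f,i$, blocks for $f\ne t-1$ first, then those for $t-1$ in nonincreasing size. For $r=\ell(\boldsymbol\mu^e)$ and $n\ge\|\boldsymbol\mu\|+r$, $\boldsymbol\mu^{\uparrow n}$ agrees with $\boldsymbol\mu$ off $t-1$ and $\boldsymbol\mu^{\uparrow n}(t-1)=(\boldsymbol\mu^e_1+1,\dots,\boldsymbol\mu^e_r+1,1,\dots,1)$ with $n-r-\|\boldsymbol\mu\|$ trailing ones. *)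

theory Defs
  imports "Jordan_Normal_Form.Matrix" "HOL-Computational_Algebra.Polynomial_Factorial"
begin

definition Phi :: "'a::field poly set" where
  "Phi = {f. lead_coeff f = 1 \<and> irreducible f \<and> f \<noteq> [:0, 1:]}"

definition is_partition :: "nat list \<Rightarrow> bool" where
  "is_partition xs \<longleftrightarrow> sorted (rev xs) \<and> (\<forall>x\<in>set xs. 0 < x)"

definition supp_part :: "('a::field poly \<Rightarrow> nat list) \<Rightarrow> 'a poly set" where
  "supp_part mu = {f. mu f \<noteq> []}"

definition in_P_Phi :: "('a::field poly \<Rightarrow> nat list) \<Rightarrow> bool" where
  "in_P_Phi mu \<longleftrightarrow> finite (supp_part mu) \<and> supp_part mu \<subseteq> Phi \<and> (\<forall>f. is_partition (mu f))"

definition tm1 :: "'a::field poly" where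
  "tm1 = [:-1, 1:]"

definition size_part :: "('a::field poly \<Rightarrow> nat list) \<Rightarrow> nat" where
  "size_part mu = (\<Sum>f\<in>supp_part mu. degree f * sum_list (mu f))"

definition mu_e :: "('a::field poly \<Rightarrow> nat list) \<Rightarrow> nat list" where
  "mu_e mu = mu tm1"

definition mu_up :: "('a::field poly \<Rightarrow> nat list) \<Rightarrow> nat \<Rightarrow> ('a poly \<Rightarrow> nat list)" where
  "mu_up mu n = (\<lambda>f. if f = tm1
      then map Suc (mu_e mu) @ replicate (n - length (mu_e mu) - size_part mu) 1
      else mu f)"

text \<open>Companion matrix J(f) for f = t^d - sum a_i t^(i-1): ones on the superdiagonal,
  last row (a_1,...,a_d), i.e. a_i = - coeff f (i-1).\<close>
definition companion :: "'a::field poly \<Rightarrow> 'a mat" where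
  "companion f = (let d = degree f in
     mat d d (\<lambda>(i, j). if i = d - 1 then - coeff f j else if j = i + 1 then 1 else 0))"

text \<open>J_m(f): block upper triangular, m diagonal blocks J(f), identity blocks on the block superdiagonal.\<close>
definition jordan_block_f :: "'a::field poly \<Rightarrow> nat \<Rightarrow> 'a mat" where
  "jordan_block_f f m = (let d = degree f in
     mat (d * m) (d * m) (\<lambda>(i, j).
       if i div d = j div d then companion f $$ (i mod d, j mod d)
       else if j div d = i div d + 1 then (if i mod d = j mod d then 1 else 0)
       else 0))"

text \<open>J_lambda: blocks for f \<noteq> t-1 first (polynomials taken in the order of the list fs,
  parts of each partition in the listed, nonincreasing order), then the blocks for t-1
  in nonincreasing size.\<close>
definition J_mat :: "'a::field poly list \<Rightarrow> ('a poly \<Rightarrow> nat list) \<Rightarrow> 'a mat" where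
  "J_mat fs mu = diag_block_mat
     (concat (map (\<lambda>f. map (jordan_block_f f) (mu f)) fs)
      @ map (jordan_block_f tm1) (mu tm1))"

definition GL :: "nat \<Rightarrow> 'a::field mat set" where
  "GL n = {A \<in> carrier_mat n n. invertible_mat A}"

definition centralizer_GL :: "nat \<Rightarrow> 'a::field mat \<Rightarrow> 'a mat set" where
  "centralizer_GL n J = {A \<in> GL n. A * J = J * A}"

end

(*
  Let J be the matrix of mu^(up k); the matrix of mu^(up n) is then diag(J, I_(n-k)). Every
  vector fixed by J is orthogonal to every vector fixed by J^T: a block J_m(f) with f \<noteq> t - 1
  fixes no nonzero vector because f(1) \<noteq> 0, while the unipotent blocks all have size at least 2,
  so their fixed vectors live on the first coordinate and those of the transpose on the last.
  Hence C B = 0 whenever J B = B and C J = C. A block matrix [[P, B], [C, D]] commutes with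
  diag(J, I) iff P J = J P, J B = B and C J = C, and for such matrices this orthogonality makes
  invertibility equivalent to that of P and D. So the centralizer is the product of the four
  sets in the formula.
*)
theory Submission
  imports Defs "Jordan_Normal_Form.Determinant"
begin

lemma invertible_matE:
  assumes A: "A \<in> carrier_mat n n" and "invertible_mat A"
  obtains B where "B \<in> carrier_mat n n" "A * B = 1\<^sub>m n" "B * A = 1\<^sub>m n"
proof -
  obtain B where AB: "A * B = 1\<^sub>m n" and BA: "B * A = 1\<^sub>m (dim_row B)"
    using assms unfolding invertible_mat_def inverts_mat_def by auto
  have "B \<in> carrier_mat n n"
    using arg_cong[OF AB, of dim_col] arg_cong[OF BA, of dim_col] A by auto
  with AB BA that show ?thesis by auto
qed

lemma invertible_mat_iff_det_nonzero:
  fixes A :: "'a::field mat"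
  assumes A: "A \<in> carrier_mat n n"
  shows "invertible_mat A \<longleftrightarrow> det A \<noteq> 0"
proof
  assume "invertible_mat A"
  then obtain B where B: "B \<in> carrier_mat n n" and "A * B = 1\<^sub>m n"
    using invertible_matE[OF A \<open>invertible_mat A\<close>] by metis
  then have "det A * det B = 1" using det_mult[OF A B] by simp
  then show "det A \<noteq> 0" by auto
next
  assume "det A \<noteq> 0"
  from det_non_zero_imp_unit[OF A this, of undefined]
  obtain B where "B \<in> carrier_mat n n" "A * B = 1\<^sub>m n" "B * A = 1\<^sub>m n"
    unfolding Units_def ring_mat_def by auto
  then show "invertible_mat A"
    using A unfolding invertible_mat_def inverts_mat_def by auto
qed

lemma commute_inverse:
  fixes A X Y :: "'a::semiring_1 mat"
  assumes A: "A \<in> carrier_mat n n" and X: "X \<in> carrier_mat n n" and Y: "Y \<in> carrier_mat n n"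
    and XY: "X * Y = 1\<^sub>m n" and YX: "Y * X = 1\<^sub>m n" and XA: "X * A = A * X"
  shows "Y * A = A * Y"
proof -
  have "Y * A = Y * (A * (X * Y))" by (simp add: XY right_mult_one_mat[OF A])
  also have "A * (X * Y) = (X * A) * Y" using assoc_mult_mat[OF A X Y] XA by simp
  also have "Y * ((X * A) * Y) = (Y * X) * (A * Y)"
    using assoc_mult_mat[OF X A Y] assoc_mult_mat[OF Y X mult_carrier_mat[OF A Y]] by simp
  also have "\<dots> = A * Y" using A Y YX by simp
  finally show ?thesis .
qed

lemma split_block_four_block_mat:
  assumes "A \<in> carrier_mat nr1 nc1" "B \<in> carrier_mat nr1 nc2"
    and "C \<in> carrier_mat nr2 nc1" "D \<in> carrier_mat nr2 nc2"
  shows "split_block (four_block_mat A B C D) nr1 nc1 = (A, B, C, D)"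
  unfolding split_block_def Let_def using assms by (auto intro!: eq_matI)

lemma four_block_mat_eq_iff:
  assumes "A \<in> carrier_mat nr1 nc1" "B \<in> carrier_mat nr1 nc2"
    and "C \<in> carrier_mat nr2 nc1" "D \<in> carrier_mat nr2 nc2"
    and "A' \<in> carrier_mat nr1 nc1" "B' \<in> carrier_mat nr1 nc2"
    and "C' \<in> carrier_mat nr2 nc1" "D' \<in> carrier_mat nr2 nc2"
  shows "four_block_mat A B C D = four_block_mat A' B' C' D' \<longleftrightarrow>
    A = A' \<and> B = B' \<and> C = C' \<and> D = D'"
proof
  assume "four_block_mat A B C D = four_block_mat A' B' C' D'"
  then show "A = A' \<and> B = B' \<and> C = C' \<and> D = D'"
    using split_block_four_block_mat[OF assms(1-4)] split_block_four_block_mat[OF assms(5-8)]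
    by (metis prod.inject)
qed auto

lemma det_nonzero_if_add_square_zero_eq_one:
  fixes Q N :: "'a::field mat"
  assumes Q: "Q \<in> carrier_mat n n" and N: "N \<in> carrier_mat n n"
    and QN: "Q + N = 1\<^sub>m n" and NN: "N * N = 0\<^sub>m n n"
  shows "det Q \<noteq> 0"
proof -
  have "Q * N + N * N = N"
    using QN add_mult_distrib_mat[OF Q N N] N by simp
  then have "Q * N = N" using NN Q N by simp
  then have "Q * (1\<^sub>m n + N) = 1\<^sub>m n"
    using mult_add_distrib_mat[OF Q one_carrier_mat N] QN Q by simp
  then have "det Q * det (1\<^sub>m n + N) = 1"
    using det_mult[OF Q, of "1\<^sub>m n + N"] N by simp
  then show ?thesis by auto
qed

section \<open>Orthogonality of fixed vectors\<close>

lemma zero_mat_mult_vec [simp]: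
  "v \<in> carrier_vec m \<Longrightarrow> 0\<^sub>m n m *\<^sub>v v = (0\<^sub>v n :: 'a::semiring_0 vec)"
  by (intro eq_vecI) (auto simp: scalar_prod_def)

definition fixed_vectors_orthogonal :: "'a::comm_ring_1 mat \<Rightarrow> bool" where
  "fixed_vectors_orthogonal J \<longleftrightarrow>
    (\<forall>b c. b \<in> carrier_vec (dim_row J) \<longrightarrow> c \<in> carrier_vec (dim_row J) \<longrightarrow>
      J *\<^sub>v b = b \<longrightarrow> transpose_mat J *\<^sub>v c = c \<longrightarrow> c \<bullet> b = 0)"

lemma fixed_vectors_orthogonalD:
  assumes "fixed_vectors_orthogonal J" "J \<in> carrier_mat k k"
    and "b \<in> carrier_vec k" "c \<in> carrier_vec k" "J *\<^sub>v b = b" "transpose_mat J *\<^sub>v c = c"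
  shows "c \<bullet> b = 0"
  using assms unfolding fixed_vectors_orthogonal_def by auto

lemma fixed_vectors_orthogonal_if_no_fixed_vector:
  assumes "\<And>b. b \<in> carrier_vec (dim_row J) \<Longrightarrow> J *\<^sub>v b = b \<Longrightarrow> b = 0\<^sub>v (dim_row J)"
  shows "fixed_vectors_orthogonal J"
  unfolding fixed_vectors_orthogonal_def
proof (intro allI impI)
  fix b c :: "'a vec"
  assume "b \<in> carrier_vec (dim_row J)" "c \<in> carrier_vec (dim_row J)" "J *\<^sub>v b = b"
  then show "c \<bullet> b = 0" using assms scalar_prod_right_zero by metis
qed

lemma fixed_vectors_orthogonal_four_block_mat:
  assumes A: "A \<in> carrier_mat k1 k1" and D: "D \<in> carrier_mat k2 k2"
    and orth_A: "fixed_vectors_orthogonal A" and orth_D: "fixed_vectors_orthogonal D"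
  shows "fixed_vectors_orthogonal (four_block_mat A (0\<^sub>m k1 k2) (0\<^sub>m k2 k1) D)"
  unfolding fixed_vectors_orthogonal_def
proof (intro allI impI)
  let ?M = "four_block_mat A (0\<^sub>m k1 k2) (0\<^sub>m k2 k1) D"
  fix b c :: "'a vec"
  assume b: "b \<in> carrier_vec (dim_row ?M)" and c: "c \<in> carrier_vec (dim_row ?M)"
    and fix_b: "?M *\<^sub>v b = b" and fix_c: "transpose_mat ?M *\<^sub>v c = c"
  define b1 b2 c1 c2 where "b1 = vec_first b k1" and "b2 = vec_last b k2"
    and "c1 = vec_first c k1" and "c2 = vec_last c k2"
  have b_split: "b = b1 @\<^sub>v b2" and c_split: "c = c1 @\<^sub>v c2"
    using A D b c unfolding b1_def b2_def c1_def c2_def by auto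
  have carr: "b1 \<in> carrier_vec k1" "b2 \<in> carrier_vec k2"
    "c1 \<in> carrier_vec k1" "c2 \<in> carrier_vec k2"
    unfolding b1_def b2_def c1_def c2_def by auto
  have "?M *\<^sub>v b = (A *\<^sub>v b1) @\<^sub>v (D *\<^sub>v b2)"
    unfolding b_split using four_block_mat_mult_vec[OF A _ _ D carr(1,2)] A D carr by simp
  with fix_b have "A *\<^sub>v b1 = b1" "D *\<^sub>v b2 = b2"
    unfolding b_split using append_vec_eq[OF mult_mat_vec_carrier[OF A carr(1)] carr(1)] by auto
  moreover have "transpose_mat ?M *\<^sub>v c = (transpose_mat A *\<^sub>v c1) @\<^sub>v (transpose_mat D *\<^sub>v c2)"
    unfolding c_split transpose_four_block_mat[OF A zero_carrier_mat zero_carrier_mat D]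
    using four_block_mat_mult_vec[of "transpose_mat A" k1 k1 _ k2 _ k2 "transpose_mat D" c1 c2]
      A D carr
    by simp
  with fix_c have "transpose_mat A *\<^sub>v c1 = c1" "transpose_mat D *\<^sub>v c2 = c2"
    unfolding c_split using A carr append_vec_eq[of "transpose_mat A *\<^sub>v c1" k1 c1] by auto
  ultimately have "c1 \<bullet> b1 = 0" "c2 \<bullet> b2 = 0"
    using fixed_vectors_orthogonalD[OF orth_A A] fixed_vectors_orthogonalD[OF orth_D D] carr
    by auto
  then show "c \<bullet> b = 0"
    unfolding b_split c_split scalar_prod_append[OF carr(3,4,1,2)] by simp
qed

lemma fixed_vectors_orthogonal_diag_block_mat:
  assumes "Ball (set As) square_mat" and "Ball (set As) fixed_vectors_orthogonal"
  shows "fixed_vectors_orthogonal (diag_block_mat As)"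
  using assms
proof (induction As)
  case Nil
  then show ?case unfolding fixed_vectors_orthogonal_def by (auto simp: scalar_prod_def)
next
  case (Cons A As)
  let ?B = "diag_block_mat As"
  have sq_A: "dim_col A = dim_row A" and sq_B: "dim_col ?B = dim_row ?B"
    using Cons.prems diag_block_mat_square[of As] by (simp_all add: square_mat.simps)
  then have A: "A \<in> carrier_mat (dim_row A) (dim_row A)"
    and B: "?B \<in> carrier_mat (dim_row ?B) (dim_row ?B)" by auto
  have "diag_block_mat (A # As) =
    four_block_mat A (0\<^sub>m (dim_row A) (dim_row ?B)) (0\<^sub>m (dim_row ?B) (dim_row A)) ?B"
    by (simp only: diag_block_mat.simps Let_def sq_A sq_B)
  then show ?case
    using fixed_vectors_orthogonal_four_block_mat[OF A B] Cons by simp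
qed

lemma fixed_mult_cofixed_eq_zero:
  assumes J: "J \<in> carrier_mat k k" and orth: "fixed_vectors_orthogonal J"
    and B: "B \<in> carrier_mat k m" and C: "C \<in> carrier_mat m' k"
    and JB: "J * B = B" and CJ: "C * J = C"
  shows "C * B = 0\<^sub>m m' m"
proof (rule eq_matI)
  fix i j
  assume i: "i < dim_row (0\<^sub>m m' m :: 'a mat)" and j: "j < dim_col (0\<^sub>m m' m :: 'a mat)"
  have "J *\<^sub>v col B j = col B j"
    using col_mult2[OF J B, of j] JB j by simp
  moreover have "transpose_mat J * transpose_mat C = transpose_mat C"
    using transpose_mult[OF C J] CJ by simp
  then have "transpose_mat J *\<^sub>v row C i = row C i"
    using col_mult2[of "transpose_mat J" k k "transpose_mat C" m' i] J C i by simp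
  ultimately have "row C i \<bullet> col B j = 0"
    using B C by (intro fixed_vectors_orthogonalD[OF orth J]) auto
  then show "(C * B) $$ (i, j) = 0\<^sub>m m' m $$ (i, j)" using i j B C by simp
qed (use B C in auto)

section \<open>The centralizer of a block diagonal matrix with an identity block\<close>

lemma four_block_commute_diag_one_iff:
  fixes J :: "'a::semiring_1 mat"
  assumes J: "J \<in> carrier_mat k k" and P: "P \<in> carrier_mat k k" and B: "B \<in> carrier_mat k m"
    and C: "C \<in> carrier_mat m k" and D: "D \<in> carrier_mat m m"
  shows "four_block_mat P B C D * four_block_mat J (0\<^sub>m k m) (0\<^sub>m m k) (1\<^sub>m m)
       = four_block_mat J (0\<^sub>m k m) (0\<^sub>m m k) (1\<^sub>m m) * four_block_mat P B C D
     \<longleftrightarrow> P * J = J * P \<and> J * B = B \<and> C * J = C"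
proof -
  have "four_block_mat P B C D * four_block_mat J (0\<^sub>m k m) (0\<^sub>m m k) (1\<^sub>m m)
     = four_block_mat (P * J) B (C * J) D"
    by (subst mult_four_block_mat[OF P B C D J zero_carrier_mat zero_carrier_mat one_carrier_mat])
      (use P B C D J in simp)
  moreover have "four_block_mat J (0\<^sub>m k m) (0\<^sub>m m k) (1\<^sub>m m) * four_block_mat P B C D
     = four_block_mat (J * P) (J * B) C D"
    by (subst mult_four_block_mat[OF J zero_carrier_mat zero_carrier_mat one_carrier_mat P B C D])
      (use P B C D J in simp)
  ultimately show ?thesis
    using P B C D J by (auto simp: four_block_mat_eq_iff[of _ k k _ m _ m])
qed

lemma invertible_four_block_mat_if_diagonal_invertible:
  fixes J :: "'a::field mat"
  assumes J: "J \<in> carrier_mat k k" and orth: "fixed_vectors_orthogonal J"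
    and P: "P \<in> carrier_mat k k" and B: "B \<in> carrier_mat k m"
    and C: "C \<in> carrier_mat m k" and D: "D \<in> carrier_mat m m"
    and PJ: "P * J = J * P" and JB: "J * B = B" and CJ: "C * J = C"
    and inv_P: "invertible_mat P" and inv_D: "invertible_mat D"
  shows "invertible_mat (four_block_mat P B C D)"
proof -
  obtain P' where P': "P' \<in> carrier_mat k k"
    and PP': "P * P' = 1\<^sub>m k" and P'P: "P' * P = 1\<^sub>m k"
    using invertible_matE[OF P inv_P] by metis
  have P'B: "P' * B \<in> carrier_mat k m" using P' B by simp
  have "J * (P' * B) = P' * B"
    using commute_inverse[OF J P P' PP' P'P PJ] JB
    by (metis assoc_mult_mat[OF J P' B] assoc_mult_mat[OF P' J B])
  then have C_P'B: "C * (P' * B) = 0\<^sub>m m m"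
    by (rule fixed_mult_cofixed_eq_zero[OF J orth P'B C _ CJ])
  \<comment> \<open>Right multiplication by this unitriangular matrix clears the upper right block.\<close>
  define R where "R = four_block_mat (1\<^sub>m k) (- (P' * B)) (0\<^sub>m m k) (1\<^sub>m m)"
  have R: "R \<in> carrier_mat (k + m) (k + m)" unfolding R_def by simp
  have upper_right: "P * (- (P' * B)) + B * 1\<^sub>m m = 0\<^sub>m k m"
    using assoc_mult_mat[OF P P' B] PP' P P' B by (simp add: mult_minus_distrib_mat)
  have lower_right: "C * (- (P' * B)) + D * 1\<^sub>m m = D"
  proof -
    have "C * (- (P' * B)) = - (0\<^sub>m m m)"
      using uminus_mult_right_mat[of C "P' * B"] C_P'B C P' B by simp
    then show ?thesis using D by (auto intro!: eq_matI)
  qed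
  have "four_block_mat P B C D * R = four_block_mat (P * 1\<^sub>m k + B * 0\<^sub>m m k)
    (P * (- (P' * B)) + B * 1\<^sub>m m) (C * 1\<^sub>m k + D * 0\<^sub>m m k) (C * (- (P' * B)) + D * 1\<^sub>m m)"
    unfolding R_def
    by (rule mult_four_block_mat[OF P B C D one_carrier_mat _ zero_carrier_mat one_carrier_mat])
      (use P'B in simp)
  also have "\<dots> = four_block_mat P (0\<^sub>m k m) C D"
    unfolding upper_right lower_right using P B C D by simp
  finally have "four_block_mat P B C D * R = four_block_mat P (0\<^sub>m k m) C D" .
  then have "det (four_block_mat P B C D) * det R = det P * det D"
    using det_mult[OF _ R, of "four_block_mat P B C D"] P D
      det_four_block_mat_upper_right_zero[OF P refl C D] by simp
  moreover have "det R = 1"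
    unfolding R_def using P'B by (subst det_four_block_mat_lower_left_zero[of _ k _ m]) auto
  ultimately have "det (four_block_mat P B C D) = det P * det D" by simp
  then show ?thesis
    using invertible_mat_iff_det_nonzero[OF four_block_carrier_mat[OF P D]]
      invertible_mat_iff_det_nonzero[OF P] invertible_mat_iff_det_nonzero[OF D] inv_P inv_D
    by simp
qed

lemma diagonal_invertible_if_invertible_four_block_mat:
  fixes J :: "'a::field mat"
  assumes J: "J \<in> carrier_mat k k" and orth: "fixed_vectors_orthogonal J"
    and P: "P \<in> carrier_mat k k" and B: "B \<in> carrier_mat k m"
    and C: "C \<in> carrier_mat m k" and D: "D \<in> carrier_mat m m"
    and PJ: "P * J = J * P" and JB: "J * B = B" and CJ: "C * J = C"
    and inv: "invertible_mat (four_block_mat P B C D)"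
  shows "invertible_mat P" and "invertible_mat D"
proof -
  let ?X = "four_block_mat P B C D"
  let ?A = "four_block_mat J (0\<^sub>m k m) (0\<^sub>m m k) (1\<^sub>m m)"
  have X: "?X \<in> carrier_mat (k + m) (k + m)" and A: "?A \<in> carrier_mat (k + m) (k + m)"
    using P D J by auto
  obtain Y where Y: "Y \<in> carrier_mat (k + m) (k + m)"
    and XY: "?X * Y = 1\<^sub>m (k + m)" and YX: "Y * ?X = 1\<^sub>m (k + m)"
    using invertible_matE[OF X inv] by metis
  obtain P' B' C' D' where split_Y: "split_block Y k k = (P', B', C', D')"
    by (cases "split_block Y k k")
  have P': "P' \<in> carrier_mat k k" and B': "B' \<in> carrier_mat k m"
    and C': "C' \<in> carrier_mat m k" and D': "D' \<in> carrier_mat m m"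
    and Y_eq: "Y = four_block_mat P' B' C' D'"
    using split_block[OF split_Y, of m m] Y by auto
  have "?X * ?A = ?A * ?X"
    using four_block_commute_diag_one_iff[OF J P B C D] PJ JB CJ by simp
  then have "Y * ?A = ?A * Y"
    by (rule commute_inverse[OF A X Y XY YX])
  then have JB': "J * B' = B'" and C'J: "C' * J = C'"
    using four_block_commute_diag_one_iff[OF J P' B' C' D'] Y_eq by simp_all
  have "four_block_mat (P * P' + B * C') (P * B' + B * D') (C * P' + D * C') (C * B' + D * D')
      = four_block_mat (1\<^sub>m k) (0\<^sub>m k m) (0\<^sub>m m k) (1\<^sub>m m)"
    using XY mult_four_block_mat[OF P B C D P' B' C' D'] Y_eq by simp
  then have "P * P' + B * C' = 1\<^sub>m k \<and> C * B' + D * D' = 1\<^sub>m m"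
    by (subst (asm) four_block_mat_eq_iff[of _ k k _ m _ m]) (use P B C D P' B' C' D' in auto)
  then have PP'_BC': "P * P' + B * C' = 1\<^sub>m k" and CB'_DD': "C * B' + D * D' = 1\<^sub>m m"
    by simp_all
  have "C * B' = 0\<^sub>m m m"
    by (rule fixed_mult_cofixed_eq_zero[OF J orth B' C JB' CJ])
  then have "D * D' = 1\<^sub>m m" using CB'_DD' D D' by simp
  then have "det D * det D' = 1" using det_mult[OF D D'] by simp
  then show "invertible_mat D" using invertible_mat_iff_det_nonzero[OF D] by auto
  \<comment> \<open>\<open>P * P'\<close> differs from the identity by the square-zero matrix \<open>B * C'\<close>.\<close>
  have "C' * B = 0\<^sub>m m m"
    by (rule fixed_mult_cofixed_eq_zero[OF J orth B C' JB C'J])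
  then have "(B * C') * (B * C') = 0\<^sub>m k k"
    using B C'
    by (simp add: assoc_mult_mat[of B k m "C'" k "B * C'" k] assoc_mult_mat[OF C' B C', symmetric])
  then have "det (P * P') \<noteq> 0"
    using det_nonzero_if_add_square_zero_eq_one[OF _ _ PP'_BC'] P P' B C' by simp
  then show "invertible_mat P"
    using det_mult[OF P P'] invertible_mat_iff_det_nonzero[OF P] by auto
qed

lemma card_centralizer_four_block_diag_one:
  fixes J :: "'a::field mat"
  assumes J: "J \<in> carrier_mat k k" and orth: "fixed_vectors_orthogonal J"
  shows "card (centralizer_GL (k + m) (four_block_mat J (0\<^sub>m k m) (0\<^sub>m m k) (1\<^sub>m m))) =
    card (centralizer_GL k J) * card (GL m :: 'a mat set)
    * card {B \<in> carrier_mat k m. J * B = B} * card {C \<in> carrier_mat m k. C * J = C}"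
proof -
  let ?A = "four_block_mat J (0\<^sub>m k m) (0\<^sub>m m k) (1\<^sub>m m)"
  let ?S = "centralizer_GL k J \<times> {B \<in> carrier_mat k m. J * B = B}
    \<times> {C \<in> carrier_mat m k. C * J = C} \<times> (GL m :: 'a mat set)"
  let ?glue = "\<lambda>(P, B, C, D). four_block_mat P B C D"
  have mem: "four_block_mat P B C D \<in> centralizer_GL (k + m) ?A \<longleftrightarrow> (P, B, C, D) \<in> ?S"
    if P: "P \<in> carrier_mat k k" and B: "B \<in> carrier_mat k m"
      and C: "C \<in> carrier_mat m k" and D: "D \<in> carrier_mat m m" for P B C D
    using four_block_commute_diag_one_iff[OF J P B C D]
      invertible_four_block_mat_if_diagonal_invertible[OF J orth P B C D]
      diagonal_invertible_if_invertible_four_block_mat[OF J orth P B C D] P B C D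
    unfolding centralizer_GL_def GL_def by auto
  have "centralizer_GL (k + m) ?A \<subseteq> ?glue ` ?S"
  proof
    fix X assume X: "X \<in> centralizer_GL (k + m) ?A"
    obtain P B C D where split_X: "split_block X k k = (P, B, C, D)"
      by (cases "split_block X k k")
    have "X \<in> carrier_mat (k + m) (k + m)" using X unfolding centralizer_GL_def GL_def by simp
    then have carr: "P \<in> carrier_mat k k" "B \<in> carrier_mat k m" "C \<in> carrier_mat m k"
      "D \<in> carrier_mat m m" and X_eq: "X = four_block_mat P B C D"
      using split_block[OF split_X, of m m] by auto
    have "(P, B, C, D) \<in> ?S" using mem[OF carr] X X_eq by simp
    then show "X \<in> ?glue ` ?S"
      using X_eq by (intro image_eqI[where x = "(P, B, C, D)"]) simp_all
  qed
  moreover have "?glue ` ?S \<subseteq> centralizer_GL (k + m) ?A"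
    using mem unfolding centralizer_GL_def GL_def by auto
  ultimately have "centralizer_GL (k + m) ?A = ?glue ` ?S" by (rule subset_antisym)
  moreover have "inj_on ?glue ?S"
    by (rule inj_onI)
      (auto simp: centralizer_GL_def GL_def four_block_mat_eq_iff[of _ k k _ m _ m])
  ultimately have "card (centralizer_GL (k + m) ?A) = card ?S"
    by (simp add: card_image)
  then show ?thesis by (simp add: card_cartesian_product)
qed

section \<open>Generalized Jordan blocks\<close>

lemma degree_tm1 [simp]: "degree (tm1 :: 'a::field poly) = 1"
  and coeff_tm1_0 [simp]: "coeff (tm1 :: 'a::field poly) 0 = -1"
  unfolding tm1_def by auto

lemma jordan_block_f_carrier: "jordan_block_f f m \<in> carrier_mat (degree f * m) (degree f * m)"
  unfolding jordan_block_f_def Let_def by auto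

lemma jordan_block_f_tm1_index:
  assumes "i < m" "j < m"
  shows "jordan_block_f (tm1 :: 'a::field poly) m $$ (i, j) =
    (if i = j \<or> i + 1 = j then 1 else 0)"
  using assms unfolding jordan_block_f_def companion_def Let_def by auto

lemma sum_indicator_two:
  fixes x :: "nat \<Rightarrow> 'a::comm_ring_1"
  assumes "i \<noteq> j" "i < m" "j < m"
  shows "(\<Sum>l<m. (if i = l \<or> j = l then 1 else 0) * x l) = x i + x j"
proof -
  have "(\<Sum>l<m. (if i = l \<or> j = l then 1 else 0) * x l)
      = (\<Sum>l<m. (if l = i then x l else 0) + (if l = j then x l else 0))"
    by (rule sum.cong) (use assms in auto)
  also have "\<dots> = x i + x j" by (simp add: sum.distrib assms)
  finally show ?thesis .
qed

lemma fixed_vectors_orthogonal_jordan_block_f_tm1: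
  assumes m: "2 \<le> m"
  shows "fixed_vectors_orthogonal (jordan_block_f (tm1 :: 'a::field poly) m)"
  unfolding fixed_vectors_orthogonal_def
proof (intro allI impI)
  let ?J = "jordan_block_f (tm1 :: 'a poly) m"
  have J: "?J \<in> carrier_mat m m" using jordan_block_f_carrier[of "tm1 :: 'a poly" m] by simp
  fix b c :: "'a vec"
  assume b: "b \<in> carrier_vec (dim_row ?J)" and c: "c \<in> carrier_vec (dim_row ?J)"
    and fix_b: "?J *\<^sub>v b = b" and fix_c: "transpose_mat ?J *\<^sub>v c = c"
  have b_zero: "b $ (i + 1) = 0" if i: "i + 1 < m" for i
  proof -
    have "(?J *\<^sub>v b) $ i = (\<Sum>l<m. ?J $$ (i, l) * b $ l)"
      using J b i by (simp add: scalar_prod_def atLeast0LessThan)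
    also have "\<dots> = (\<Sum>l<m. (if i = l \<or> i + 1 = l then 1 else 0) * b $ l)"
      using i by (intro sum.cong) (auto simp: jordan_block_f_tm1_index)
    also have "\<dots> = b $ i + b $ (i + 1)"
      using i by (intro sum_indicator_two) auto
    finally show ?thesis using fix_b by simp
  qed
  have c_zero: "c $ i = 0" if i: "i + 1 < m" for i
  proof -
    have "(transpose_mat ?J *\<^sub>v c) $ (i + 1) = (\<Sum>l<m. ?J $$ (l, i + 1) * c $ l)"
      using J c i by (simp add: scalar_prod_def atLeast0LessThan)
    also have "\<dots> = (\<Sum>l<m. (if i + 1 = l \<or> i = l then 1 else 0) * c $ l)"
      using i by (intro sum.cong) (auto simp: jordan_block_f_tm1_index)
    also have "\<dots> = c $ (i + 1) + c $ i"
      using i by (intro sum_indicator_two) auto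
    finally show ?thesis using fix_c by simp
  qed
  \<comment> \<open>Fixed vectors of \<open>?J\<close> are supported on the first coordinate, those of its transpose
    on the last, and these differ because \<open>m \<ge> 2\<close>.\<close>
  have "c $ l * b $ l = 0" if "l < m" for l
    using b_zero[of "l - 1"] c_zero[of l] that m by (cases l) auto
  then show "c \<bullet> b = 0"
    using J b by (simp add: scalar_prod_def sum.neutral)
qed

lemma Phi_other_than_tm1:
  fixes f :: "'a::field poly"
  assumes "f \<in> Phi" "f \<noteq> tm1"
  shows "degree f \<ge> 1" and "lead_coeff f = 1" and "poly f 1 \<noteq> 0"
proof -
  have irr: "irreducible f" and lc: "lead_coeff f = 1" using assms unfolding Phi_def by auto
  then show "degree f \<ge> 1" "lead_coeff f = 1"
    by (auto simp: irreducible_def is_unit_iff_degree)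
  show "poly f 1 \<noteq> 0"
  proof
    assume "poly f 1 = 0"
    then have "tm1 dvd f" unfolding tm1_def using poly_eq_0_iff_dvd by blast
    moreover have "\<not> is_unit (tm1 :: 'a poly)"
      using is_unit_iff_degree[of "tm1 :: 'a poly"] by (simp add: tm1_def)
    ultimately obtain g where f_eq: "f = tm1 * g" and "is_unit g"
      using irr by (metis dvdE irreducibleD)
    then obtain c where "g = [:c:]" using is_unit_poly_iff by blast
    then have "f = smult c tm1" using f_eq by simp
    moreover from this have "c = 1" using lc by (cases "c = 0") (simp_all add: tm1_def)
    ultimately have "f = tm1" by simp
    with assms(2) show False ..
  qed
qed

lemma poly_one_eq_sum_coeff:
  fixes f :: "'a::comm_semiring_1 poly"
  assumes "lead_coeff f = 1"
  shows "poly f 1 = (\<Sum>j<degree f. coeff f j) + 1"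
  using assms by (simp add: poly_altdef lessThan_Suc_atMost[symmetric])

lemma companion_fixed_vector_eq_zero:
  fixes f :: "'a::field poly"
  assumes d: "degree f \<ge> 1" and lc: "lead_coeff f = 1" and f1: "poly f 1 \<noteq> 0"
    and b: "b \<in> carrier_vec (degree f)" and fix_b: "companion f *\<^sub>v b = b"
  shows "b = 0\<^sub>v (degree f)"
proof -
  define d where "d = degree f"
  have d1: "1 \<le> d" using d d_def by simp
  have entry: "companion f $$ (i, j) =
      (if i = d - 1 then - coeff f j else if j = i + 1 then 1 else 0)"
    if "i < d" "j < d" for i j
    using that unfolding companion_def Let_def d_def by auto
  have row: "b $ i = (\<Sum>j<d. companion f $$ (i, j) * b $ j)" if "i < d" for i
    using that b fix_b[THEN arg_cong, of "\<lambda>v. v $ i"]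
    unfolding d_def companion_def Let_def by (simp add: scalar_prod_def atLeast0LessThan)
  have step: "b $ (i + 1) = b $ i" if i: "i + 1 < d" for i
  proof -
    have "(\<Sum>j<d. companion f $$ (i, j) * b $ j) = (\<Sum>j<d. if j = i + 1 then b $ j else 0)"
      by (rule sum.cong) (use i in \<open>auto simp: entry\<close>)
    then show ?thesis using i row[of i] by simp
  qed
  have const: "b $ i = b $ 0" if "i < d" for i
    using that
  proof (induction i)
    case (Suc i)
    then show ?case using step[of i] by simp
  qed simp
  \<comment> \<open>The last row says that \<open>b $ 0\<close> is annihilated by \<open>poly f 1\<close>.\<close>
  have "(\<Sum>j<d. companion f $$ (d - 1, j) * b $ j) = (\<Sum>j<d. - coeff f j * b $ 0)"
  proof (rule sum.cong)
    fix j assume "j \<in> {..<d}"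
    then show "companion f $$ (d - 1, j) * b $ j = - coeff f j * b $ 0"
      using entry[of "d - 1" j] const[of j] d1 by simp
  qed simp
  then have "b $ 0 = (\<Sum>j<d. - coeff f j * b $ 0)"
    using row[of "d - 1"] const[of "d - 1"] d1 by simp
  also have "\<dots> = - (\<Sum>j<d. coeff f j) * b $ 0"
    by (simp add: sum_distrib_right sum_negf)
  finally have "poly f 1 * b $ 0 = 0"
    using poly_one_eq_sum_coeff[OF lc] unfolding d_def
    by (simp add: algebra_simps eq_neg_iff_add_eq_0)
  then have "b $ 0 = 0" using f1 by simp
  then show ?thesis
    using b const unfolding d_def by (intro eq_vecI) (simp_all only: index_zero_vec carrier_vecD)
qed

lemma jordan_block_f_index:
  assumes "i < degree f * m" "j < degree f * m"
  shows "jordan_block_f f m $$ (i, j) = (let d = degree f in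
    if i div d = j div d then companion f $$ (i mod d, j mod d)
    else if j div d = i div d + 1 then (if i mod d = j mod d then 1 else 0)
    else 0)"
  using assms unfolding jordan_block_f_def Let_def by simp

lemma jordan_block_f_Suc:
  fixes f :: "'a::field poly"
  assumes d: "degree f \<ge> 1"
  obtains E where "E \<in> carrier_mat (degree f) (degree f * m)"
    and "jordan_block_f f (Suc m) =
      four_block_mat (companion f) E (0\<^sub>m (degree f * m) (degree f)) (jordan_block_f f m)"
proof -
  define d where "d = degree f"
  let ?J = "jordan_block_f f (Suc m)"
  define E where "E = mat d (d * m) (\<lambda>(i, j). ?J $$ (i, j + d))"
  have C: "companion f \<in> carrier_mat d d"
    unfolding companion_def Let_def d_def by simp
  have "?J = four_block_mat (companion f) E (0\<^sub>m (d * m) d) (jordan_block_f f m)"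
  proof (rule eq_matI)
    let ?M = "four_block_mat (companion f) E (0\<^sub>m (d * m) d) (jordan_block_f f m)"
    fix i j assume "i < dim_row ?M" and "j < dim_col ?M"
    then have i: "i < d + d * m" and j: "j < d + d * m"
      using C jordan_block_f_carrier[of f m] unfolding E_def d_def by auto
    have shift: "x div d = Suc ((x - d) div d)" "x mod d = (x - d) mod d" if "d \<le> x" for x
      using that d d_def by (simp_all add: le_div_geq le_mod_geq)
    show "?J $$ (i, j) = ?M $$ (i, j)"
      using i j C jordan_block_f_carrier[of f m] shift[of i] shift[of j]
        jordan_block_f_index[of i f "Suc m" j] jordan_block_f_index[of "i - d" f m "j - d"]
      unfolding E_def d_def[symmetric] Let_def by (auto simp: d_def[symmetric])
  qed (use C jordan_block_f_carrier[of f m] jordan_block_f_carrier[of f "Suc m"]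
      in \<open>auto simp: E_def d_def\<close>)
  moreover have "E \<in> carrier_mat d (d * m)" unfolding E_def by simp
  ultimately show ?thesis using that unfolding d_def by blast
qed

lemma jordan_block_f_fixed_vector_eq_zero:
  fixes f :: "'a::field poly"
  assumes d: "degree f \<ge> 1" and lc: "lead_coeff f = 1" and f1: "poly f 1 \<noteq> 0"
  shows "b \<in> carrier_vec (degree f * m) \<Longrightarrow> jordan_block_f f m *\<^sub>v b = b \<Longrightarrow>
    b = 0\<^sub>v (degree f * m)"
proof (induction m arbitrary: b)
  case 0
  then show ?case by auto
next
  case (Suc m)
  define d where "d = degree f"
  obtain E where E: "E \<in> carrier_mat d (d * m)" and J_eq: "jordan_block_f f (Suc m) =
      four_block_mat (companion f) E (0\<^sub>m (d * m) d) (jordan_block_f f m)"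
    using jordan_block_f_Suc[OF d] unfolding d_def by blast
  have C: "companion f \<in> carrier_mat d d"
    unfolding companion_def Let_def d_def by simp
  have J: "jordan_block_f f m \<in> carrier_mat (d * m) (d * m)"
    using jordan_block_f_carrier unfolding d_def by blast
  define b1 b2 where "b1 = vec_first b d" and "b2 = vec_last b (d * m)"
  have b_split: "b = b1 @\<^sub>v b2" using Suc.prems(1) unfolding b1_def b2_def d_def by simp
  have b1: "b1 \<in> carrier_vec d" and b2: "b2 \<in> carrier_vec (d * m)"
    unfolding b1_def b2_def by auto
  have "(companion f *\<^sub>v b1 + E *\<^sub>v b2) @\<^sub>v (jordan_block_f f m *\<^sub>v b2) = b1 @\<^sub>v b2"
    using Suc.prems(2) four_block_mat_mult_vec[OF C E zero_carrier_mat J b1 b2] b1 b2 J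
    unfolding J_eq b_split by simp
  then have fix_b1: "companion f *\<^sub>v b1 + E *\<^sub>v b2 = b1"
    and fix_b2: "jordan_block_f f m *\<^sub>v b2 = b2"
    using append_vec_eq[of "companion f *\<^sub>v b1 + E *\<^sub>v b2" d b1] C E b1 b2 by auto
  have "b2 = 0\<^sub>v (d * m)" using Suc.IH[OF _ fix_b2] b2 unfolding d_def by simp
  moreover have "E *\<^sub>v 0\<^sub>v (d * m) = 0\<^sub>v d" using E by (intro eq_vecI) auto
  ultimately have "companion f *\<^sub>v b1 = b1" using fix_b1 C b1 by simp
  then have "b1 = 0\<^sub>v d"
    using companion_fixed_vector_eq_zero[OF d lc f1] b1 unfolding d_def by blast
  then show ?case
    using b_split \<open>b2 = 0\<^sub>v (d * m)\<close> unfolding d_def by auto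
qed

lemma fixed_vectors_orthogonal_jordan_block_f:
  fixes f :: "'a::field poly"
  assumes "f \<in> Phi" "f \<noteq> tm1"
  shows "fixed_vectors_orthogonal (jordan_block_f f m)"
  using jordan_block_f_fixed_vector_eq_zero[OF Phi_other_than_tm1[OF assms]]
    jordan_block_f_carrier[of f m]
  by (intro fixed_vectors_orthogonal_if_no_fixed_vector) simp

section \<open>The matrices of partition data\<close>

lemma sum_list_concat:
  "sum_list (concat xss) = sum_list (map sum_list (xss :: 'a::monoid_add list list))"
  by (induction xss) auto

lemma J_mat_carrier:
  "J_mat fs \<nu> \<in> carrier_mat ((\<Sum>f\<leftarrow>fs. degree f * sum_list (\<nu> f)) + sum_list (\<nu> tm1))
    ((\<Sum>f\<leftarrow>fs. degree f * sum_list (\<nu> f)) + sum_list (\<nu> tm1))"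
proof -
  have dims: "dim_row (jordan_block_f f x) = degree f * x"
    "dim_col (jordan_block_f f x) = degree f * x"
    for f :: "'a poly" and x
    using jordan_block_f_carrier[of f x] by auto
  show ?thesis
    unfolding J_mat_def carrier_mat_def
    by (simp add: dim_diag_block_mat map_concat sum_list_concat o_def dims sum_list_const_mult)
qed

lemma J_mat_append_tm1:
  assumes "tm1 \<notin> set fs"
  shows "J_mat fs (\<nu>(tm1 := \<nu> tm1 @ ys)) =
    (let A = J_mat fs \<nu>; B = diag_block_mat (map (jordan_block_f tm1) ys)
     in four_block_mat A (0\<^sub>m (dim_row A) (dim_col B)) (0\<^sub>m (dim_row B) (dim_col A)) B)"
proof -
  have same: "map (\<lambda>f. map (jordan_block_f f) ((\<nu>(tm1 := \<nu> tm1 @ ys)) f)) fs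
      = map (\<lambda>f. map (jordan_block_f f) (\<nu> f)) fs"
    using assms by (intro map_cong) auto
  have "J_mat fs (\<nu>(tm1 := \<nu> tm1 @ ys)) = diag_block_mat
      ((concat (map (\<lambda>f. map (jordan_block_f f) (\<nu> f)) fs) @ map (jordan_block_f tm1) (\<nu> tm1))
       @ map (jordan_block_f tm1) ys)"
    unfolding J_mat_def same by simp
  then show ?thesis
    unfolding diag_block_mat_append J_mat_def .
qed

lemma diag_block_mat_jordan_block_tm1_ones:
  "diag_block_mat (map (jordan_block_f (tm1 :: 'a::field poly)) (replicate j 1)) = 1\<^sub>m j"
proof (induction j)
  case 0
  then show ?case by (intro eq_matI) auto
next
  case (Suc j)
  have "jordan_block_f (tm1 :: 'a poly) 1 = 1\<^sub>m 1"
    using jordan_block_f_carrier[of "tm1 :: 'a poly" 1]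
    by (intro eq_matI) (auto simp: jordan_block_f_tm1_index)
  then have "diag_block_mat (map (jordan_block_f (tm1 :: 'a poly)) (replicate (Suc j) 1))
      = four_block_mat (1\<^sub>m 1) (0\<^sub>m 1 j) (0\<^sub>m j 1) (1\<^sub>m j)"
    using Suc.IH by (simp add: Let_def)
  then show ?case by (simp only: four_block_one_mat) simp
qed

lemma size_part_eq_sum_list:
  assumes "distinct fs" and "set fs = supp_part mu - {tm1}"
  shows "size_part mu = (\<Sum>f\<leftarrow>fs. degree f * sum_list (mu f)) + sum_list (mu tm1)"
proof (cases "tm1 \<in> supp_part mu")
  case True
  then have "supp_part mu = insert tm1 (set fs)" and "tm1 \<notin> set fs" using assms(2) by auto
  then show ?thesis
    unfolding size_part_def using assms(1) by (simp add: sum_list_distinct_conv_sum_set)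
next
  case False
  then have "supp_part mu = set fs" and "mu tm1 = []"
    using assms(2) unfolding supp_part_def by auto
  then show ?thesis
    unfolding size_part_def using assms(1) by (simp add: sum_list_distinct_conv_sum_set)
qed

lemma mu_up_other: "f \<noteq> tm1 \<Longrightarrow> mu_up mu n f = mu f"
  unfolding mu_up_def by simp

lemma mu_up_tm1_minimal:
  "k = size_part mu + length (mu_e mu) \<Longrightarrow> mu_up mu k tm1 = map Suc (mu tm1)"
  unfolding mu_up_def mu_e_def by simp

lemma mu_up_eq_append_ones:
  assumes "k = size_part mu + length (mu_e mu)" and "k \<le> n"
  shows "mu_up mu n = (mu_up mu k)(tm1 := mu_up mu k tm1 @ replicate (n - k) 1)"
  using assms unfolding mu_up_def mu_e_def by (intro ext) (simp add: diff_diff_left add.commute)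

lemma J_mat_mu_up_carrier:
  assumes "distinct fs" and "set fs = supp_part mu - {tm1}"
    and "k = size_part mu + length (mu_e mu)"
  shows "J_mat fs (mu_up mu k) \<in> carrier_mat k k"
proof -
  have "(\<Sum>f\<leftarrow>fs. degree f * sum_list (mu_up mu k f))
      = (\<Sum>f\<leftarrow>fs. degree f * sum_list (mu f))"
    using assms(2) by (intro arg_cong[where f = sum_list] map_cong) (auto simp: mu_up_other)
  moreover have "sum_list (mu_up mu k tm1) = sum_list (mu tm1) + length (mu tm1)"
    using mu_up_tm1_minimal[OF assms(3)] sum_list_Suc[of "\<lambda>x. x" "mu tm1"] by simp
  ultimately have "(\<Sum>f\<leftarrow>fs. degree f * sum_list (mu_up mu k f)) + sum_list (mu_up mu k tm1)
      = size_part mu + length (mu_e mu)"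
    using size_part_eq_sum_list[OF assms(1,2)] unfolding mu_e_def by simp
  then show ?thesis using J_mat_carrier[of fs "mu_up mu k"] assms(3) by simp
qed

lemma J_mat_mu_up_eq_four_block:
  assumes "tm1 \<notin> set fs" and "k = size_part mu + length (mu_e mu)" and "k \<le> n"
    and J: "J_mat fs (mu_up mu k) \<in> carrier_mat k k"
  shows "J_mat fs (mu_up mu n) =
    four_block_mat (J_mat fs (mu_up mu k)) (0\<^sub>m k (n - k)) (0\<^sub>m (n - k) k) (1\<^sub>m (n - k))"
  unfolding mu_up_eq_append_ones[OF assms(2,3)] J_mat_append_tm1[OF assms(1)]
    diag_block_mat_jordan_block_tm1_ones
  using J by (simp add: Let_def)

lemma fixed_vectors_orthogonal_J_mat_mu_up:
  assumes "in_P_Phi mu" and "set fs = supp_part mu - {tm1}"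
    and "k = size_part mu + length (mu_e mu)"
  shows "fixed_vectors_orthogonal (J_mat fs (mu_up mu k))"
proof -
  let ?blocks = "concat (map (\<lambda>f. map (jordan_block_f f) (mu_up mu k f)) fs)
    @ map (jordan_block_f tm1) (mu_up mu k tm1)"
  have "square_mat A \<and> fixed_vectors_orthogonal A" if A: "A \<in> set ?blocks" for A
  proof -
    consider (other) f x where "f \<in> set fs" "A = jordan_block_f f x"
      | (unipotent) x where "x \<in> set (mu tm1)" "A = jordan_block_f tm1 (Suc x)"
      using A assms(2) by (auto simp: mu_up_tm1_minimal[OF assms(3)])
    then show ?thesis
    proof cases
      case other
      then have "f \<in> Phi" "f \<noteq> tm1" using assms(1,2) unfolding in_P_Phi_def by auto
      then show ?thesis
        using other(2) jordan_block_f_carrier[of f x] fixed_vectors_orthogonal_jordan_block_f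
        by auto
    next
      case unipotent
      \<comment> \<open>Since \<open>k\<close> leaves no room for trailing ones, all unipotent blocks have size at least 2.\<close>
      then have "0 < x" using assms(1) unfolding in_P_Phi_def is_partition_def by blast
      then show ?thesis
        using unipotent(2) jordan_block_f_carrier[of "tm1 :: 'a poly" "Suc x"]
          fixed_vectors_orthogonal_jordan_block_f_tm1[of "Suc x"] by auto
    qed
  qed
  then show ?thesis
    unfolding J_mat_def by (intro fixed_vectors_orthogonal_diag_block_mat) auto
qed

theorem corollary2p8:
  fixes mu :: "'a::{finite, field} poly \<Rightarrow> nat list"
    and fs :: "'a poly list"
    and n k :: nat
  assumes "in_P_Phi mu"
    and "distinct fs" and "set fs = supp_part mu - {tm1}"
    and "k = size_part mu + length (mu_e mu)"
    and "k \<le> n"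
  shows "card (centralizer_GL n (J_mat fs (mu_up mu n))) =
           card (centralizer_GL k (J_mat fs (mu_up mu k)))
         * card (GL (n - k) :: 'a mat set)
         * card {B \<in> carrier_mat k (n - k). J_mat fs (mu_up mu k) * B = B}
         * card {C \<in> carrier_mat (n - k) k. C * J_mat fs (mu_up mu k) = C}"
proof -
  have J: "J_mat fs (mu_up mu k) \<in> carrier_mat k k"
    using assms(2-4) by (rule J_mat_mu_up_carrier)
  have orth: "fixed_vectors_orthogonal (J_mat fs (mu_up mu k))"
    using assms(1,3,4) by (rule fixed_vectors_orthogonal_J_mat_mu_up)
  have "tm1 \<notin> set fs" using assms(3) by auto
  then have "J_mat fs (mu_up mu n) =
      four_block_mat (J_mat fs (mu_up mu k)) (0\<^sub>m k (n - k)) (0\<^sub>m (n - k) k) (1\<^sub>m (n - k))"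
    using assms(4,5) J by (rule J_mat_mu_up_eq_four_block)
  then show ?thesis
    using card_centralizer_four_block_diag_one[OF J orth, of "n - k"] assms(5) by simp
qed

end
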